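(* Let $S$ be a string of length $n$ and $\tau,k$ positive integers. Given random access to the sorted list of starting positions of the occurrences in $S$ of an aperiodic substring $P$ of $S$, together with the number of these occurrences, one can check whether $P$ is $(\tau,k)$-resilient in $S$ in $\mathcal{O}(\tau+k)$ time.
   Context: An integer $p>0$ is a period of $P$ if $P[t]=P[t+p]$ for all $t\in[0,|P|-p)$; $\mathsf{per}(P)$ is the smallest period; $P$ is aperiodic if $\mathsf{per}(P)>|P|/2$. Here, a substring $P$ of $S$ is $(\tau,k)$-resilient in $S$ if $P$ occurs at least $\tau$ times in every string obtained from $S$ by replacing the letters at at most $k$ positions with a letter $\#$ not in the alphabet of $S$. *)

theory Defs
  imports Main "HOL-Library.Sublist"
begin

definition is_period :: "'a list \<Rightarrow> nat \<Rightarrow> bool" where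
  "is_period P p \<longleftrightarrow> p > 0 \<and> (\<forall>t. t + p < length P \<longrightarrow> P ! t = P ! (t + p))"

definition per :: "'a list \<Rightarrow> nat" where
  "per P = (LEAST p. is_period P p)"

definition aperiodic :: "'a list \<Rightarrow> bool" where
  "aperiodic P \<longleftrightarrow> 2 * per P > length P"

definition occs :: "'a list \<Rightarrow> 'a list \<Rightarrow> nat set" where
  "occs S P = {i. i + length P \<le> length S \<and> take (length P) (drop i S) = P}"

text \<open>Replacing the letters at positions D by a fresh letter; the fresh letter is None.\<close>
definition mask :: "'a list \<Rightarrow> nat set \<Rightarrow> 'a option list" where
  "mask S D = map (\<lambda>i. if i \<in> D then None else Some (S ! i)) [0..<length S]"

definition resilient :: "nat \<Rightarrow> nat \<Rightarrow> 'a list \<Rightarrow> 'a list \<Rightarrow> bool" where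
  "resilient \<tau> k S P \<longleftrightarrow>
     (\<forall>D. D \<subseteq> {0..<length S} \<and> card D \<le> k \<longrightarrow>
        card (occs (mask S D) (map Some P)) \<ge> \<tau>)"

datatype instr =
    LoadC nat nat
  | Add nat nat nat
  | Sub nat nat nat
  | ReadIn nat nat
  | LoadI nat nat
  | StoreI nat nat
  | JumpLe nat nat nat
  | Halt

type_synonym config = "nat \<times> (nat \<Rightarrow> nat)"

definition rd :: "nat list \<Rightarrow> nat \<Rightarrow> nat" where
  "rd A i = (if i < length A then A ! i else 0)"

fun exec :: "instr \<Rightarrow> nat list \<Rightarrow> config \<Rightarrow> config" where
  "exec (LoadC r c) A (pc, R) = (Suc pc, R(r := c))"
| "exec (Add r a b) A (pc, R) = (Suc pc, R(r := R a + R b))"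
| "exec (Sub r a b) A (pc, R) = (Suc pc, R(r := R a - R b))"
| "exec (ReadIn r j) A (pc, R) = (Suc pc, R(r := rd A (R j)))"
| "exec (LoadI r j) A (pc, R) = (Suc pc, R(r := R (R j)))"
| "exec (StoreI i j) A (pc, R) = (Suc pc, R(R i := R j))"
| "exec (JumpLe a b l) A (pc, R) = (if R a \<le> R b then (l, R) else (Suc pc, R))"
| "exec Halt A (pc, R) = (pc, R)"

definition halted :: "instr list \<Rightarrow> config \<Rightarrow> bool" where
  "halted prog cfg \<longleftrightarrow> fst cfg \<ge> length prog \<or> prog ! fst cfg = Halt"

definition step :: "instr list \<Rightarrow> nat list \<Rightarrow> config \<Rightarrow> config" where
  "step prog A cfg = (if halted prog cfg then cfg else exec (prog ! fst cfg) A cfg)"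

definition run :: "instr list \<Rightarrow> nat list \<Rightarrow> nat \<Rightarrow> config \<Rightarrow> config" where
  "run prog A t cfg = (step prog A ^^ t) cfg"

text \<open>Initial configuration: R0 = tau, R1 = k, R2 = |P|, R3 = number of occurrences,
  R4 = n = |S|; all other registers 0.  Output: R0 = 1 means "yes".\<close>
definition init :: "nat \<Rightarrow> nat \<Rightarrow> nat \<Rightarrow> nat \<Rightarrow> nat \<Rightarrow> config" where
  "init \<tau> k m occ n = (0, (\<lambda>_. 0)(0 := \<tau>, 1 := k, 2 := m, 3 := occ, 4 := n))"

end

theory Submission
  imports Defs
begin

text \<open>Let A be the sorted list of occurrences of P and m = |P| > 0. Three occurrences sharing a
  position would put two gaps, each at least per P, into a window shorter than m; so for aperiodic
  P a position lies in at most two occurrences, and then in two that are consecutive in A and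
  overlap. Hence k masked positions destroy at most k + min k g occurrences, where g is the size of
  a maximum matching of overlapping consecutive pairs, and this bound is attained. So P is
  (\<tau>, k)-resilient iff \<tau> + k + min k g \<le> |A|. A greedy scan over A computes g, and it is only
  run when |A| < \<tau> + 2k, which bounds the running time by O(\<tau> + k).\<close>

section \<open>Occurrences, masks and periods\<close>

lemma mem_occs_iff:
  "i \<in> occs S P \<longleftrightarrow> i + length P \<le> length S \<and> (\<forall>t<length P. S ! (i + t) = P ! t)"
  unfolding occs_def by (auto simp: list_eq_iff_nth_eq)

lemma finite_occs: "finite (occs S P)"
  by (rule finite_subset[of _ "{0..length S}"]) (auto simp: occs_def)

lemma length_mask [simp]: "length (mask S D) = length S"
  by (simp add: mask_def)

lemma nth_mask: "i < length S \<Longrightarrow> mask S D ! i = (if i \<in> D then None else Some (S ! i))"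
  by (simp add: mask_def)

lemma occs_mask:
  "occs (mask S D) (map Some P) = {i \<in> occs S P. \<forall>p\<in>D. \<not> (i \<le> p \<and> p < i + length P)}"
proof -
  have "i \<in> occs (mask S D) (map Some P) \<longleftrightarrow> i \<in> occs S P \<and> (\<forall>t<length P. i + t \<notin> D)" for i
    by (auto simp: mem_occs_iff nth_mask split: if_splits)
  moreover have "(\<forall>t<length P. i + t \<notin> D) \<longleftrightarrow> (\<forall>p\<in>D. \<not> (i \<le> p \<and> p < i + length P))" for i
    by (metis le_iff_add nat_add_left_cancel_less)
  ultimately show ?thesis
    by blast
qed

lemma per_le_diff_occs:
  assumes "i \<in> occs S P" "i' \<in> occs S P" "i < i'" "i' < i + length P"
  shows "per P \<le> i' - i"
proof -
  have "P ! t = P ! (t + (i' - i))" if "t + (i' - i) < length P" for t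
  proof -
    have "P ! t = S ! (i' + t)"
      using assms(2) that by (simp add: mem_occs_iff)
    also have "i' + t = i + (t + (i' - i))"
      using assms(3) by simp
    also have "S ! \<dots> = P ! (t + (i' - i))"
      using assms(1) that by (simp add: mem_occs_iff)
    finally show ?thesis .
  qed
  then have "is_period P (i' - i)"
    using assms(3) by (simp add: is_period_def)
  then show ?thesis
    unfolding per_def by (rule Least_le)
qed

section \<open>Matchings of overlapping neighbours\<close>

text \<open>G is the set of left ends i of pairwise disjoint edges {i, i + 1} of the path on the indices
  of A, where i and i + 1 are joined if A ! i and A ! (i + 1) are less than m apart.\<close>

definition path_matching :: "nat list \<Rightarrow> nat \<Rightarrow> nat set \<Rightarrow> bool" where
  "path_matching A m G \<longleftrightarrow>
     finite G \<and> (\<forall>i\<in>G. Suc i < length A \<and> A ! Suc i < A ! i + m) \<and> (\<forall>i\<in>G. Suc i \<notin> G)"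

function greedy_matching :: "nat list \<Rightarrow> nat \<Rightarrow> nat \<Rightarrow> nat" where
  "greedy_matching A m j =
     (if Suc j < length A then
        if A ! Suc j < A ! j + m then Suc (greedy_matching A m (j + 2))
        else greedy_matching A m (Suc j)
      else 0)"
  by pat_completeness auto
termination
  by (relation "measure (\<lambda>(A, m, j). length A - j)") auto

declare greedy_matching.simps [simp del]

lemma greedy_matching_end [simp]: "\<not> Suc j < length A \<Longrightarrow> greedy_matching A m j = 0"
  by (subst greedy_matching.simps) simp

lemma greedy_matching_close [simp]:
  "Suc j < length A \<Longrightarrow> A ! Suc j < A ! j + m \<Longrightarrow>
     greedy_matching A m j = Suc (greedy_matching A m (j + 2))"
  by (subst greedy_matching.simps) simp

lemma greedy_matching_far [simp]:
  "Suc j < length A \<Longrightarrow> \<not> A ! Suc j < A ! j + m \<Longrightarrow>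
     greedy_matching A m j = greedy_matching A m (Suc j)"
  by (subst greedy_matching.simps) simp

lemma path_matching_subset: "path_matching A m G \<Longrightarrow> H \<subseteq> G \<Longrightarrow> path_matching A m H"
  unfolding path_matching_def by (meson finite_subset subsetD)

lemma card_le_greedy_matching:
  "path_matching A m G \<Longrightarrow> G \<subseteq> {j..} \<Longrightarrow> card G \<le> greedy_matching A m j"
proof (induction A m j arbitrary: G rule: greedy_matching.induct)
  case (1 A m j)
  show ?case
  proof (cases "Suc j < length A")
    case False
    then have "G = {}"
      using "1.prems" by (force simp: path_matching_def)
    then show ?thesis
      by simp
  next
    case True
    show ?thesis
    proof (cases "A ! Suc j < A ! j + m")
      case close: True
      have "card (G - {j, Suc j}) \<le> greedy_matching A m (j + 2)"
        using "1.prems" by (intro "1.IH"(1)[OF True close]) (auto simp: path_matching_def)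
      moreover have "card G \<le> Suc (card (G - {j, Suc j}))"
      proof -
        \<comment> \<open>G contains at most one of j and Suc j\<close>
        obtain x where "G - {j, Suc j} = G - {x}"
          using "1.prems"(1) unfolding path_matching_def by blast
        then show ?thesis
          by (simp add: card_Diff_singleton_if) linarith
      qed
      ultimately show ?thesis
        using True close by simp
    next
      case far: False
      have "j \<notin> G"
        using "1.prems"(1) far by (auto simp: path_matching_def)
      then have "G \<subseteq> {Suc j..}"
        using "1.prems"(2) by (auto simp: Suc_le_eq order_le_less)
      then show ?thesis
        using "1.IH"(2)[OF True far "1.prems"(1)] True far by simp
    qed
  qed
qed

lemma greedy_matching_attained:
  "\<exists>G. path_matching A m G \<and> G \<subseteq> {j..} \<and> card G = greedy_matching A m j"
proof (induction A m j rule: greedy_matching.induct)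
  case (1 A m j)
  show ?case
  proof (cases "Suc j < length A")
    case False
    then show ?thesis
      by (intro exI[of _ "{}"]) (simp add: path_matching_def)
  next
    case True
    show ?thesis
    proof (cases "A ! Suc j < A ! j + m")
      case close: True
      obtain G where G: "path_matching A m G" "G \<subseteq> {j + 2..}" "card G = greedy_matching A m (j + 2)"
        using "1.IH"(1)[OF True close] by blast
      then have "j \<notin> G" "Suc j \<notin> G" "finite G"
        by (auto simp: path_matching_def)
      with G True close show ?thesis
        by (intro exI[of _ "insert j G"]) (auto simp: path_matching_def)
    next
      case far: False
      obtain G where "path_matching A m G" "G \<subseteq> {Suc j..}" "card G = greedy_matching A m (Suc j)"
        using "1.IH"(2)[OF True far] by blast
      with True far show ?thesis
        by (intro exI[of _ G]) auto
    qed
  qed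
qed

lemma card_le_card_plus_adjacent_collisions:
  fixes H :: "nat set" and h :: "nat \<Rightarrow> 'b"
  assumes "finite H" "finite D" "h ` H \<subseteq> D"
    and adjacent: "\<And>i i'. i \<in> H \<Longrightarrow> i' \<in> H \<Longrightarrow> i < i' \<Longrightarrow> h i = h i' \<Longrightarrow> i' = Suc i"
  obtains E where "\<forall>i\<in>E. i \<in> H \<and> Suc i \<in> H \<and> h i = h (Suc i)" "\<forall>i\<in>E. Suc i \<notin> E"
    "card H \<le> card D + card E" "card E \<le> card D"
proof -
  define E where "E = {i \<in> H. Suc i \<in> H \<and> h i = h (Suc i)}"
  have E: "\<forall>i\<in>E. i \<in> H \<and> Suc i \<in> H \<and> h i = h (Suc i)"
    unfolding E_def by blast
  have no_chain: "\<forall>i\<in>E. Suc i \<notin> E"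
  proof (intro ballI notI)
    fix i assume "i \<in> E" "Suc i \<in> E"
    then have "i \<in> H" "Suc (Suc i) \<in> H" "h i = h (Suc (Suc i))"
      unfolding E_def by auto
    from adjacent[OF this(1,2) _ this(3)] show False
      by simp
  qed
  have "finite E"
    using \<open>finite H\<close> unfolding E_def by simp
  have "inj_on h E"
  proof (rule linorder_inj_onI')
    fix i i' assume "i \<in> E" "i' \<in> E" "i < i'"
    moreover have "i \<in> H" "i' \<in> H"
      using \<open>i \<in> E\<close> \<open>i' \<in> E\<close> E by blast+
    ultimately show "h i \<noteq> h i'"
      using adjacent[of i i'] no_chain by blast
  qed
  then have "card E \<le> card D"
    using E assms(2,3) by (intro card_inj_on_le) auto
  have "inj_on h (H - Suc ` E)"
  proof (rule linorder_inj_onI')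
    fix i i' assume "i \<in> H - Suc ` E" "i' \<in> H - Suc ` E" "i < i'"
    moreover have "i \<notin> E" if "i' = Suc i"
      using that \<open>i' \<in> H - Suc ` E\<close> by blast
    ultimately show "h i \<noteq> h i'"
      using adjacent[of i i'] unfolding E_def by blast
  qed
  then have "card (H - Suc ` E) \<le> card D"
    using assms(2,3) by (intro card_inj_on_le) auto
  moreover have "card H - card (Suc ` E) \<le> card (H - Suc ` E)"
    using \<open>finite E\<close> by (intro diff_card_le_card_Diff) simp
  moreover have "card (Suc ` E) = card E"
    by (simp add: card_image)
  ultimately have "card H \<le> card D + card E"
    by linarith
  from that[OF E no_chain this \<open>card E \<le> card D\<close>] show ?thesis .
qed

lemma card_Un_Suc_image:
  assumes "finite G" "\<forall>i\<in>G. Suc i \<notin> G"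
  shows "card (G \<union> Suc ` G) = 2 * card G"
proof -
  have "G \<inter> Suc ` G = {}"
    using assms(2) by blast
  then show ?thesis
    using assms(1) by (simp add: card_Un_disjoint card_image)
qed

section \<open>Occurrences destroyed by masking\<close>

context
  fixes S P :: "'a list" and A :: "nat list"
  assumes A_def: "A = sorted_list_of_set (occs S P)"
begin

lemma length_occ_list: "length A = card (occs S P)"
  by (simp add: A_def)

lemma nth_occ_list_strict_mono: "i < j \<Longrightarrow> j < length A \<Longrightarrow> A ! i < A ! j"
  unfolding A_def by (metis sorted_wrt_nth_less strict_sorted_list_of_set)

lemma set_occ_list: "set A = occs S P"
  by (simp add: A_def finite_occs)

lemma nth_occ_list_mem: "i < length A \<Longrightarrow> A ! i \<in> occs S P"
  using set_occ_list nth_mem by blast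

lemma nth_occ_list_less_length: "i < length A \<Longrightarrow> 0 < length P \<Longrightarrow> A ! i < length S"
  using nth_occ_list_mem[of i] unfolding mem_occs_iff by linarith

lemma overlapping_occs_adjacent:
  assumes "aperiodic P" "i < i'" "i' < length A" "A ! i' < A ! i + length P"
  shows "i' = Suc i"
proof (rule ccontr)
  assume "i' \<noteq> Suc i"
  then have "A ! i < A ! Suc i" "A ! Suc i < A ! i'"
    using assms(2,3) nth_occ_list_strict_mono by auto
  then have "per P \<le> A ! Suc i - A ! i" "per P \<le> A ! i' - A ! Suc i"
    using assms nth_occ_list_mem \<open>i' \<noteq> Suc i\<close>
    by (auto intro!: per_le_diff_occs[where S = S])
  then show False
    using assms(1,4) \<open>A ! Suc i < A ! i'\<close> unfolding aperiodic_def by linarith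
qed

definition hit_occs :: "nat set \<Rightarrow> nat set" where
  "hit_occs D = {i. i < length A \<and> (\<exists>p\<in>D. A ! i \<le> p \<and> p < A ! i + length P)}"

lemma hit_occsI: "i < length A \<Longrightarrow> p \<in> D \<Longrightarrow> A ! i \<le> p \<Longrightarrow> p < A ! i + length P \<Longrightarrow> i \<in> hit_occs D"
  unfolding hit_occs_def by blast

lemma finite_hit_occs: "finite (hit_occs D)"
  unfolding hit_occs_def by simp

lemma card_occs_mask: "card (occs (mask S D) (map Some P)) = length A - card (hit_occs D)"
proof -
  have "occs (mask S D) (map Some P) = (!) A ` ({..<length A} - hit_occs D)"
    unfolding occs_mask hit_occs_def set_occ_list[symmetric] by (auto simp: in_set_conv_nth)
  moreover have "inj_on ((!) A) ({..<length A} - hit_occs D)"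
    by (intro inj_on_nth) (auto simp: A_def)
  moreover have "hit_occs D \<subseteq> {..<length A}"
    unfolding hit_occs_def by blast
  ultimately show ?thesis
    by (simp add: card_image card_Diff_subset finite_hit_occs)
qed

lemma obtain_hit_occs_witness:
  assumes "aperiodic P"
  obtains h where "\<And>i. i \<in> hit_occs D \<Longrightarrow> h i \<in> D \<and> A ! i \<le> h i \<and> h i < A ! i + length P"
    and "\<And>i i'. i \<in> hit_occs D \<Longrightarrow> i' \<in> hit_occs D \<Longrightarrow> i < i' \<Longrightarrow> h i = h i' \<Longrightarrow> i' = Suc i"
proof -
  have "\<forall>i\<in>hit_occs D. \<exists>p. p \<in> D \<and> A ! i \<le> p \<and> p < A ! i + length P"
    unfolding hit_occs_def by blast
  then obtain h where h: "\<And>i. i \<in> hit_occs D \<Longrightarrow> h i \<in> D \<and> A ! i \<le> h i \<and> h i < A ! i + length P"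
    by (metis bchoice)
  moreover have "i' = Suc i"
    if "i \<in> hit_occs D" "i' \<in> hit_occs D" "i < i'" "h i = h i'" for i i'
  proof (rule overlapping_occs_adjacent[OF assms \<open>i < i'\<close>])
    show "i' < length A"
      using that(2) unfolding hit_occs_def by blast
    have "A ! i' \<le> h i'" "h i < A ! i + length P"
      using h that(1,2) by blast+
    then show "A ! i' < A ! i + length P"
      using that(4) by simp
  qed
  ultimately show ?thesis
    using that by blast
qed

lemma card_hit_occs_le:
  assumes "aperiodic P" "finite D"
  shows "card (hit_occs D) \<le> card D + min (card D) (greedy_matching A (length P) 0)"
proof -
  obtain h where h: "\<And>i. i \<in> hit_occs D \<Longrightarrow> h i \<in> D \<and> A ! i \<le> h i \<and> h i < A ! i + length P"
    and adjacent: "\<And>i i'. i \<in> hit_occs D \<Longrightarrow> i' \<in> hit_occs D \<Longrightarrow> i < i' \<Longrightarrow> h i = h i' \<Longrightarrow> i' = Suc i"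
    using obtain_hit_occs_witness[OF assms(1)] by blast
  have "h ` hit_occs D \<subseteq> D"
    using h by blast
  obtain E where
    E: "\<forall>i\<in>E. i \<in> hit_occs D \<and> Suc i \<in> hit_occs D \<and> h i = h (Suc i)" "\<forall>i\<in>E. Suc i \<notin> E"
    and card_hit: "card (hit_occs D) \<le> card D + card E" and "card E \<le> card D"
    by (rule card_le_card_plus_adjacent_collisions
        [OF finite_hit_occs assms(2) \<open>h ` hit_occs D \<subseteq> D\<close> adjacent])
  have "path_matching A (length P) E"
    unfolding path_matching_def
  proof (intro conjI ballI)
    show "finite E"
      using E(1) finite_hit_occs by (meson finite_subset subsetI)
    fix i assume "i \<in> E"
    then have "i \<in> hit_occs D" "Suc i \<in> hit_occs D" "h i = h (Suc i)"
      using E(1) by blast+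
    then have "A ! Suc i \<le> h i" "h i < A ! i + length P"
      using h by fastforce+
    then show "A ! Suc i < A ! i + length P"
      by simp
    show "Suc i < length A"
      using \<open>Suc i \<in> hit_occs D\<close> unfolding hit_occs_def by blast
    show "Suc i \<notin> E"
      using E(2) \<open>i \<in> E\<close> by blast
  qed
  then have "card E \<le> greedy_matching A (length P) 0"
    by (rule card_le_greedy_matching) simp
  with card_hit \<open>card E \<le> card D\<close> show ?thesis
    by linarith
qed

lemma matching_subset_hit_occs:
  assumes "0 < length P" "path_matching A (length P) M" "R \<subseteq> {..<length A}"
  shows "M \<union> Suc ` M \<union> R \<subseteq> hit_occs ((!) A ` (Suc ` M \<union> R))"
proof
  fix i assume "i \<in> M \<union> Suc ` M \<union> R"
  then consider (left) "i \<in> M" | (own) "i \<in> Suc ` M \<union> R"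
    by blast
  then show "i \<in> hit_occs ((!) A ` (Suc ` M \<union> R))"
  proof cases
    case left
    then have "Suc i < length A" "A ! Suc i < A ! i + length P"
      using assms(2) unfolding path_matching_def by auto
    with left show ?thesis
      using nth_occ_list_strict_mono[of i "Suc i"] by (intro hit_occsI[of _ "A ! Suc i"]) auto
  next
    case own
    then have "i < length A"
      using assms(2,3) unfolding path_matching_def by auto
    with own show ?thesis
      using assms(1) by (intro hit_occsI[of _ "A ! i"]) auto
  qed
qed

lemma ex_hit_occs_card_ge:
  assumes "0 < length P"
  shows "\<exists>D \<subseteq> {0..<length S}. card D \<le> k \<and>
           min (length A) (k + min k (greedy_matching A (length P) 0)) \<le> card (hit_occs D)"
proof -
  define j where "j = min k (greedy_matching A (length P) 0)"
  then have "j \<le> k"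
    by simp
  obtain G where G: "path_matching A (length P) G" "card G = greedy_matching A (length P) 0"
    using greedy_matching_attained by blast
  obtain M where "M \<subseteq> G" and card_M: "card M = j"
    using obtain_subset_with_card_n[of j G] G(2) unfolding j_def by auto
  from G(1) this(1) have M: "path_matching A (length P) M"
    by (rule path_matching_subset)
  then have "finite M" and C: "M \<union> Suc ` M \<subseteq> {..<length A}"
    unfolding path_matching_def by auto
  have card_C: "card (M \<union> Suc ` M) = 2 * j"
    using card_Un_Suc_image[of M] M card_M unfolding path_matching_def by simp
  then have "min (k - j) (length A - 2 * j) \<le> card ({..<length A} - (M \<union> Suc ` M))"
    using card_Diff_subset[OF finite_subset[OF C finite_lessThan] C] by simp
  then obtain R where R: "R \<subseteq> {..<length A} - (M \<union> Suc ` M)"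
    and card_R: "card R = min (k - j) (length A - 2 * j)" and "finite R"
    by (rule obtain_subset_with_card_n)
  define D where "D = (!) A ` (Suc ` M \<union> R)"
  have "card D \<le> card (Suc ` M \<union> R)"
    unfolding D_def using \<open>finite M\<close> \<open>finite R\<close> by (intro card_image_le) simp
  also have "\<dots> \<le> card (Suc ` M) + card R"
    by (rule card_Un_le)
  finally have "card D \<le> card (Suc ` M) + card R" .
  then have "card D \<le> k"
    using card_M card_R \<open>j \<le> k\<close> card_image_le[OF \<open>finite M\<close>, of Suc] by linarith
  moreover have "D \<subseteq> {0..<length S}"
    using C R nth_occ_list_less_length assms unfolding D_def by auto
  moreover have "card (M \<union> Suc ` M \<union> R) \<le> card (hit_occs D)"
    using matching_subset_hit_occs[OF assms M] R unfolding D_def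
    by (intro card_mono finite_hit_occs) auto
  moreover have "card (M \<union> Suc ` M \<union> R) = 2 * j + min (k - j) (length A - 2 * j)"
    using R card_C card_R finite_subset[OF C finite_lessThan] \<open>finite R\<close>
    by (subst card_Un_disjoint) auto
  moreover have "2 * j \<le> length A"
    using card_C card_mono[OF _ C] by simp
  then have "min (length A) (k + j) \<le> 2 * j + min (k - j) (length A - 2 * j)"
    using \<open>j \<le> k\<close> by (simp add: min_def) arith
  ultimately have "min (length A) (k + j) \<le> card (hit_occs D)"
    by linarith
  with \<open>card D \<le> k\<close> \<open>D \<subseteq> {0..<length S}\<close> show ?thesis
    unfolding j_def by blast
qed

lemma resilient_iff_card_hit_occs:
  assumes "0 < \<tau>"
  shows "resilient \<tau> k S P \<longleftrightarrow>
    (\<forall>D \<subseteq> {0..<length S}. card D \<le> k \<longrightarrow> \<tau> + card (hit_occs D) \<le> length A)"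
proof -
  have "\<tau> \<le> length A - h \<longleftrightarrow> \<tau> + h \<le> length A" for h
    using assms by arith
  then show ?thesis
    unfolding resilient_def card_occs_mask by simp blast
qed

lemma resilient_iff_greedy_matching:
  assumes "aperiodic P" "0 < \<tau>"
  shows "resilient \<tau> k S P \<longleftrightarrow>
    (if length P = 0 then \<tau> \<le> length A
     else \<tau> + k + min k (greedy_matching A (length P) 0) \<le> length A)"
proof (cases "length P = 0")
  case True
  then have "hit_occs D = {}" for D
    unfolding hit_occs_def by auto
  with True show ?thesis
    unfolding resilient_iff_card_hit_occs[OF assms(2)] by auto
next
  case False
  define g where "g = greedy_matching A (length P) 0"
  have "resilient \<tau> k S P \<longleftrightarrow> \<tau> + k + min k g \<le> length A"
  proof
    assume "resilient \<tau> k S P"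
    obtain D where "D \<subseteq> {0..<length S}" "card D \<le> k"
      and D: "min (length A) (k + min k g) \<le> card (hit_occs D)"
      using ex_hit_occs_card_ge False unfolding g_def by blast
    with \<open>resilient \<tau> k S P\<close> have "\<tau> + card (hit_occs D) \<le> length A"
      unfolding resilient_iff_card_hit_occs[OF assms(2)] by blast
    with D assms(2) show "\<tau> + k + min k g \<le> length A"
      by (cases "k + min k g \<le> length A") (simp_all add: min_absorb1 min_absorb2)
  next
    assume bound: "\<tau> + k + min k g \<le> length A"
    show "resilient \<tau> k S P"
      unfolding resilient_iff_card_hit_occs[OF assms(2)]
    proof (intro allI impI)
      fix D assume "D \<subseteq> {0..<length S}" "card D \<le> k"
      then have "card (hit_occs D) \<le> card D + min (card D) g"
        using card_hit_occs_le[OF assms(1)] finite_subset unfolding g_def by blast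
      moreover have "min (card D) g \<le> min k g"
        using \<open>card D \<le> k\<close> by (rule min.mono) simp
      ultimately show "\<tau> + card (hit_occs D) \<le> length A"
        using bound \<open>card D \<le> k\<close> by linarith
    qed
  qed
  with False show ?thesis
    unfolding g_def by simp
qed

end

section \<open>The test on the random-access machine\<close>

text \<open>Registers 5 and 9 hold the constants 0 and 1, register 7 the scan index j into A and
  register 8 the number of pairs matched so far. Instructions 1--3 accept outright when
  \<open>\<tau> + 2k \<le> |A|\<close>, 5--16 are the greedy scan, 17--23 compare \<open>\<tau> + k + min k g\<close> with |A|, and
  28--29 handle the empty pattern.\<close>

definition resilience_prog :: "instr list" where
  "resilience_prog =
    [JumpLe 2 5 28, Add 6 0 1, Add 6 6 1, JumpLe 6 3 26, LoadC 9 1,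
     Add 10 7 9, JumpLe 3 10 17, ReadIn 11 7, ReadIn 12 10, Add 11 11 2, Add 12 12 9,
       JumpLe 12 11 14,
     Add 7 7 9, JumpLe 5 5 5,
     Add 8 8 9, Add 7 10 9, JumpLe 5 5 5,
     JumpLe 1 8 20, Add 13 8 5, JumpLe 5 5 21, Add 13 1 5, Add 13 13 1, Add 13 13 0,
       JumpLe 13 3 26,
     LoadC 0 0, Halt,
     LoadC 0 1, Halt,
     JumpLe 0 3 26, JumpLe 5 5 24]"

lemma length_resilience_prog: "length resilience_prog = 30"
  by (simp add: resilience_prog_def)

text \<open>Rewrites only indexed instructions, so that \<open>step_resilience_prog\<close> applies before the
  program is unfolded.\<close>

lemmas nth_resilience_prog = arg_cong[where f = "\<lambda>p. p ! n" for n, OF resilience_prog_def]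

lemma step_resilience_prog:
  "step resilience_prog A (pc, R) =
     (if pc < length resilience_prog \<and> resilience_prog ! pc \<noteq> Halt
      then exec (resilience_prog ! pc) A (pc, R) else (pc, R))"
  by (simp add: step_def halted_def)

lemma halted_resilience_prog:
  "halted resilience_prog (pc, R) \<longleftrightarrow>
     \<not> (pc < length resilience_prog \<and> resilience_prog ! pc \<noteq> Halt)"
  by (auto simp: halted_def)

lemma run_0 [simp]: "run p A 0 cfg = cfg"
  by (simp add: run_def)

lemma run_Suc: "run p A (Suc t) cfg = run p A t (step p A cfg)"
  unfolding run_def funpow_Suc_right by simp

lemma run_numeral: "run p A (numeral n) cfg = run p A (pred_numeral n) (step p A cfg)"
  by (simp add: numeral_eq_Suc run_Suc)

lemma run_add: "run p A (s + t) cfg = run p A t (run p A s cfg)"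
  unfolding run_def by (metis add.commute comp_apply funpow_add)

lemmas resilience_prog_simps =
  run_Suc run_numeral step_resilience_prog halted_resilience_prog length_resilience_prog
  nth_resilience_prog

lemma resilience_prog_scan:
  assumes "length A = q" "R 0 = \<tau>" "R 1 = k" "R 2 = m" "R 3 = q" "R 5 = 0" "R 9 = 1" "R 7 = j"
  shows "\<exists>t \<le> 10 * (q - j) + 12. halted resilience_prog (run resilience_prog A t (5, R)) \<and>
     (snd (run resilience_prog A t (5, R)) 0 = 1 \<longleftrightarrow> \<tau> + k + min k (R 8 + greedy_matching A m j) \<le> q)"
  using assms
proof (induction A m j arbitrary: R rule: greedy_matching.induct)
  case (1 A m j)
  show ?case
  proof (cases "Suc j < q")
    case False
    then have "halted resilience_prog (run resilience_prog A 9 (5, R)) \<and>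
      (snd (run resilience_prog A 9 (5, R)) 0 = 1 \<longleftrightarrow>
         \<tau> + k + min k (R 8 + greedy_matching A m j) \<le> q)"
      using "1.prems" by (simp add: resilience_prog_simps)
    then show ?thesis
      by (intro exI[of _ 9]) simp
  next
    case True
    show ?thesis
    proof (cases "A ! Suc j < A ! j + m")
      case close: True
      define R' where "R' = snd (run resilience_prog A 10 (5, R))"
      have run: "run resilience_prog A 10 (5, R) = (5, R')"
        and "R' 8 = Suc (R 8)" and "R' 7 = j + 2"
        and "\<forall>i\<in>{0, 1, 2, 3, 5, 9}. R' i = R i"
        using True close "1.prems" unfolding R'_def by (simp_all add: resilience_prog_simps rd_def)
      then obtain t where "t \<le> 10 * (q - (j + 2)) + 12"
        "halted resilience_prog (run resilience_prog A t (5, R'))"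
        "snd (run resilience_prog A t (5, R')) 0 = 1 \<longleftrightarrow>
           \<tau> + k + min k (R' 8 + greedy_matching A m (j + 2)) \<le> q"
        using "1.IH"(1)[of R'] True close "1.prems" by auto
      with True close run \<open>R' 8 = Suc (R 8)\<close> "1.prems"(1) show ?thesis
        by (intro exI[of _ "10 + t"]) (simp add: run_add)
    next
      case far: False
      define R' where "R' = snd (run resilience_prog A 9 (5, R))"
      have run: "run resilience_prog A 9 (5, R) = (5, R')" and "R' 8 = R 8" and "R' 7 = Suc j"
        and "\<forall>i\<in>{0, 1, 2, 3, 5, 9}. R' i = R i"
        using True far "1.prems" unfolding R'_def by (simp_all add: resilience_prog_simps rd_def)
      then obtain t where "t \<le> 10 * (q - Suc j) + 12"
        "halted resilience_prog (run resilience_prog A t (5, R'))"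
        "snd (run resilience_prog A t (5, R')) 0 = 1 \<longleftrightarrow>
           \<tau> + k + min k (R' 8 + greedy_matching A m (Suc j)) \<le> q"
        using "1.IH"(2)[of R'] True far "1.prems" by auto
      with True far run \<open>R' 8 = R 8\<close> "1.prems"(1) show ?thesis
        by (intro exI[of _ "9 + t"]) (simp add: run_add)
    qed
  qed
qed

lemma resilience_prog_correct:
  fixes A :: "nat list" and \<tau> k m n :: nat
  assumes "0 < \<tau>" "0 < k"
  defines "cfg0 \<equiv> init \<tau> k m (length A) n"
  shows "\<exists>t \<le> 40 * (\<tau> + k). halted resilience_prog (run resilience_prog A t cfg0) \<and>
     (snd (run resilience_prog A t cfg0) 0 = 1 \<longleftrightarrow>
        (if m = 0 then \<tau> \<le> length A else \<tau> + k + min k (greedy_matching A m 0) \<le> length A))"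
proof (cases "m = 0 \<or> \<tau> + 2 * k \<le> length A")
  case True
  then have "halted resilience_prog (run resilience_prog A 5 cfg0) \<and>
    (snd (run resilience_prog A 5 cfg0) 0 = 1 \<longleftrightarrow>
       (if m = 0 then \<tau> \<le> length A else \<tau> + 2 * k \<le> length A))"
    unfolding cfg0_def init_def by (auto simp: resilience_prog_simps)
  moreover have "\<tau> + k + min k (greedy_matching A m 0) \<le> length A" if "\<tau> + 2 * k \<le> length A"
    using that by linarith
  ultimately show ?thesis
    using True assms(1,2) by (intro exI[of _ 5]) auto
next
  case False
  define R where "R = snd (run resilience_prog A 5 cfg0)"
  have run: "run resilience_prog A 5 cfg0 = (5, R)"
    and "R 0 = \<tau>" "R 1 = k" "R 2 = m" "R 3 = length A" "R 5 = 0" "R 9 = 1" "R 7 = 0" "R 8 = 0"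
    using False unfolding R_def cfg0_def init_def by (simp_all add: resilience_prog_simps)
  then obtain t where "t \<le> 10 * length A + 12"
    "halted resilience_prog (run resilience_prog A t (5, R))"
    "snd (run resilience_prog A t (5, R)) 0 = 1 \<longleftrightarrow> \<tau> + k + min k (greedy_matching A m 0) \<le> length A"
    using resilience_prog_scan[of A "length A" R \<tau> k m 0] by auto
  with run False assms(1,2) show ?thesis
    by (intro exI[of _ "5 + t"]) (auto simp: run_add)
qed

theorem lemma4:
  "\<exists>(prog :: instr list) (c :: nat).
     \<forall>(S :: 'a list) (P :: 'a list) (\<tau> :: nat) (k :: nat).
       sublist P S \<and> aperiodic P \<and> \<tau> > 0 \<and> k > 0 \<longrightarrow>
       (let A = sorted_list_of_set (occs S P);
            cfg0 = init \<tau> k (length P) (card (occs S P)) (length S)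
        in \<exists>t \<le> c * (\<tau> + k).
             halted prog (run prog A t cfg0) \<and>
             (snd (run prog A t cfg0) 0 = 1 \<longleftrightarrow> resilient \<tau> k S P))"
proof (intro exI[of _ resilience_prog] exI[of _ 40] allI impI)
  fix S P :: "'a list" and \<tau> k :: nat
  assume "sublist P S \<and> aperiodic P \<and> \<tau> > 0 \<and> k > 0"
  then have "aperiodic P" "0 < \<tau>" "0 < k"
    by auto
  define A where "A = sorted_list_of_set (occs S P)"
  have "length A = card (occs S P)"
    using A_def by (rule length_occ_list)
  with resilience_prog_correct[OF \<open>0 < \<tau>\<close> \<open>0 < k\<close>, of A "length P" "length S"]
    resilient_iff_greedy_matching[OF A_def \<open>aperiodic P\<close> \<open>0 < \<tau>\<close>, of k]
  show "let A = sorted_list_of_set (occs S P);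
            cfg0 = init \<tau> k (length P) (card (occs S P)) (length S)
        in \<exists>t \<le> 40 * (\<tau> + k).
             halted resilience_prog (run resilience_prog A t cfg0) \<and>
             (snd (run resilience_prog A t cfg0) 0 = 1 \<longleftrightarrow> resilient \<tau> k S P)"
    unfolding Let_def A_def[symmetric] by simp
qed

end
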